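(* Let $\lambda\ge\omega_3$ be a cardinal, $F:[\lambda]^2\to\omega_1$ any function, and $\mathcal P=\langle P,\le\rangle$ the forcing poset defined in the context. Then: (a) If $p=\langle X,\preceq,i\rangle\in P$ and $t\in T\setminus X$, then there is $p'=\langle X',\preceq',i'\rangle\in P$ with $p'\le p$ and $t\in X'$. (b) If $p=\langle X,\preceq,i\rangle\in P$, $t\in X$, $\alpha<\min\{\pi(t),\omega_1\}$ and $n<\omega$, then there are $p'=\langle X',\preceq',i'\rangle\in P$ with $p'\le p$ and $s\in X'\setminus X$ with $\pi(s)=\alpha$ and $\rho(s)>n$ such that for every $x\in X$: $s\preceq' x$ iff $t\preceq x$.
   Context: For $s=\langle\alpha,\zeta\rangle$ write $\pi(s)=\alpha$, $\rho(s)=\zeta$. Let $T=(\omega_1\times\omega)\cup(\{\omega_1,\omega_1+1\}\times\lambda)$, with $T_\alpha=\{\alpha\}\times\omega$ for $\alpha<\omega_1$, $T_{\omega_1}=\{\omega_1\}\times\lambda$, $T_{\omega_1+1}=\{\omega_1+1\}\times\lambda$, and $t_\xi=\langle\omega_1+1,\xi\rangle$ for $\xi<\lambda$. Let $\mathbb B=\{S\}\cup\lambda$ (where $S$ is a new symbol), $\mathbb B_S=\omega_1\times\omega$ and $\mathbb B_\zeta=\{\omega_1\}\times[\omega\cdot\zeta,\omega\cdot\zeta+\omega)\cup\{t_\zeta\}$ for $\zeta<\lambda$; these partition $T$, and $\pi_B:T\to\mathbb B$ is defined by $x\in\mathbb B_{\pi_B(x)}$. $P$ consists of all triples $p=\langle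 X,\preceq,i\rangle$ such that: (P1) $X\in[T]^{<\omega}$; (P2) $\preceq$ is a partial order on $X$ such that $x\prec y$ implies $\pi(x)<\pi(y)$; (P3) if $X\cap\mathbb B_\zeta\ne\emptyset$ for some $\zeta<\lambda$, then $t_\zeta\in X$; (P4) if $x\in X\cap T_{\omega_1}\cap\mathbb B_\zeta$ for $\zeta<\lambda$, then $x\prec t_\zeta$ and $x\not\prec t_\xi$ for all $\xi\ne\zeta$ (with $t_\xi\in X$); (P5) if $s\neq t$ lie in the same $\mathbb B_b$ ($b\in\mathbb B$) with $\pi(s)=\pi(t)$, then $i\{s,t\}=\emptyset$; (P6) if $t\in X\cap T_{\alpha+1}$ for some $\alpha\le\omega_1$ and $s\prec t$, then there is $v\in X\cap T_\alpha$ with $s\preceq v\prec t$; (P7) $i:[X]^2\to[X]^{<\omega}$ satisfies $i\{x,y\}=\{x\}$ whenever $x\prec y$, and whenever $x,y\in X$ are $\preceq$-incomparable: (a) for all $u\in X$, ($u\preceq x$ and $u\preceq y$) iff $u\preceq v$ for some $v\in i\{x,y\}$; (b) if $x,y\in T_{\omega_1}\cup T_{\omega_1+1}$ and $\pi_B(x)\ne\pi_B(y)$, then $\pi[i\{x,y\}]\subseteq F\{\pi_B(x),\pi_B(y)\}$ (the ordinal $F\{\cdot,\cdot\}<\omega_1$ viewed as the set of smaller ordinals). Order: $\langle X',\preceq',i'\rangle\le\langle X,\preceq,i\rangle$ iff $X\subseteq X'$, $\preceq=\preceq'\cap(X\times X)$, and $i\subseteq i'$. *)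

theory Defs
  imports Main "HOL-Library.Countable_Set"
begin

text \<open>
  The ordinal omega_1 is represented by a type 'w of class wellorder that is
  uncountable and all of whose proper initial segments are countable (this
  characterises the order type omega_1).  The cardinal lambda is represented
  by a type 'k (of cardinality lambda).  Nodes of T:
    Low a n   =  <a, n>            (a < omega_1, n < omega)
    Mid z k   =  <omega_1, omega*z + k>   (z < lambda, k < omega)
    Top z     =  <omega_1 + 1, z> = t_z   (z < lambda)
  Since lambda is infinite, every eta < lambda is uniquely omega*z + k, so
  Mid is a bijective parametrisation of T_{omega_1}.
\<close>

datatype ('w, 'k) node = Low 'w nat | Mid 'k nat | Top 'k

text \<open>Levels: ordinals up to omega_1 + 1.\<close>
datatype 'w lev = Lv 'w | LW1 | LW1s

fun lev_less :: "'w::wellorder lev \<Rightarrow> 'w lev \<Rightarrow> bool" where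
  "lev_less (Lv a) (Lv b) = (a < b)"
| "lev_less (Lv a) LW1 = True"
| "lev_less (Lv a) LW1s = True"
| "lev_less LW1 LW1s = True"
| "lev_less _ _ = False"

fun lev_succ :: "'w::wellorder lev \<Rightarrow> 'w lev \<Rightarrow> bool" where
  "lev_succ (Lv a) (Lv b) = (a < b \<and> \<not> (\<exists>c. a < c \<and> c < b))"
| "lev_succ LW1 LW1s = True"
| "lev_succ _ _ = False"

fun pi :: "('w, 'k) node \<Rightarrow> 'w lev" where
  "pi (Low a n) = Lv a"
| "pi (Mid z k) = LW1"
| "pi (Top z) = LW1s"

text \<open>The blocks: S (= omega_1 x omega) and B_z for z < lambda.\<close>
datatype 'k blk = S | B 'k

fun piB :: "('w, 'k) node \<Rightarrow> 'k blk" where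
  "piB (Low a n) = S"
| "piB (Mid z k) = B z"
| "piB (Top z) = B z"

definition strict :: "'n rel \<Rightarrow> 'n \<Rightarrow> 'n \<Rightarrow> bool" where
  "strict R x y \<longleftrightarrow> (x, y) \<in> R \<and> x \<noteq> y"

text \<open>Membership in P.  The function i : [X]^2 -> [X]^{<omega} is represented
  by a total function on sets, only its values on 2-element subsets of X matter.\<close>
definition inP :: "('k set \<Rightarrow> 'w::wellorder) \<Rightarrow>
    ('w, 'k) node set \<Rightarrow> ('w, 'k) node rel \<Rightarrow> (('w, 'k) node set \<Rightarrow> ('w, 'k) node set) \<Rightarrow> bool"
  where
  "inP F X R i \<longleftrightarrow>
     \<comment> \<open>(P1)\<close>
     finite X
     \<comment> \<open>(P2)\<close>
   \<and> partial_order_on X R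
   \<and> (\<forall>x y. strict R x y \<longrightarrow> lev_less (pi x) (pi y))
     \<comment> \<open>(P3)\<close>
   \<and> (\<forall>z. (\<exists>x\<in>X. piB x = B z) \<longrightarrow> Top z \<in> X)
     \<comment> \<open>(P4)\<close>
   \<and> (\<forall>z k. Mid z k \<in> X \<longrightarrow>
        strict R (Mid z k) (Top z) \<and> (\<forall>z'. z' \<noteq> z \<and> Top z' \<in> X \<longrightarrow> \<not> strict R (Mid z k) (Top z')))
     \<comment> \<open>(P5)\<close>
   \<and> (\<forall>s\<in>X. \<forall>t\<in>X. s \<noteq> t \<and> piB s = piB t \<and> pi s = pi t \<longrightarrow> i {s, t} = {})
     \<comment> \<open>(P6)\<close>
   \<and> (\<forall>t\<in>X. \<forall>s. \<forall>a. lev_succ a (pi t) \<and> strict R s t \<longrightarrow>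
        (\<exists>v\<in>X. pi v = a \<and> (s, v) \<in> R \<and> strict R v t))
     \<comment> \<open>(P7)\<close>
   \<and> (\<forall>x\<in>X. \<forall>y\<in>X. x \<noteq> y \<longrightarrow> i {x, y} \<subseteq> X \<and> finite (i {x, y}))
   \<and> (\<forall>x y. strict R x y \<longrightarrow> i {x, y} = {x})
   \<and> (\<forall>x\<in>X. \<forall>y\<in>X. (x, y) \<notin> R \<and> (y, x) \<notin> R \<longrightarrow>
        (\<forall>u\<in>X. ((u, x) \<in> R \<and> (u, y) \<in> R) \<longleftrightarrow> (\<exists>v\<in>i {x, y}. (u, v) \<in> R))
      \<and> ((\<exists>zx zy. piB x = B zx \<and> piB y = B zy \<and> zx \<noteq> zy \<and>
            pi x \<in> {LW1, LW1s} \<and> pi y \<in> {LW1, LW1s}) \<longrightarrow>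
          (\<forall>v\<in>i {x, y}. \<forall>zx zy. piB x = B zx \<and> piB y = B zy \<longrightarrow>
              lev_less (pi v) (Lv (F {zx, zy})))))"

definition leP :: "('n set \<times> 'n rel \<times> ('n set \<Rightarrow> 'n set)) \<Rightarrow>
                   ('n set \<times> 'n rel \<times> ('n set \<Rightarrow> 'n set)) \<Rightarrow> bool" where
  "leP p' p \<longleftrightarrow> (case p' of (X', R', i') \<Rightarrow> case p of (X, R, i) \<Rightarrow>
      X \<subseteq> X' \<and> R = R' \<inter> (X \<times> X) \<and> (\<forall>x\<in>X. \<forall>y\<in>X. x \<noteq> y \<longrightarrow> i' {x, y} = i {x, y}))"

end

theory Submission
  imports Defs
begin

text \<open>
  Both parts are proved by adding nodes one at a time.  A new node \<open>nw\<close> can be put into a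
  condition \<open>\<langle>X, \<preceq>, i\<rangle>\<close> with a prescribed set \<open>U \<subseteq> X\<close> of nodes above it, provided \<open>U\<close> is an
  upward closed set of nodes of higher level, closed under the meets given by \<open>i\<close>, and
  meeting the successor requirement (P6) and the block requirements (P3), (P4).  New pairs get
  \<open>i {nw, x} = {nw}\<close> for \<open>x \<in> U\<close> and \<open>{}\<close> otherwise.  For (a) one takes \<open>U = {}\<close>, or, for
  \<open>t \<in> T\<^sub>\<omega>\<^sub>1\<close>, the cone of \<open>t\<^sub>\<zeta>\<close>.  For (b) one takes \<open>U\<close> the cone of \<open>t\<close>, and descends through
  the successor levels below \<open>\<pi>(t)\<close>, by induction on the level: once \<open>\<alpha>\<close> is the immediate
  predecessor of the current level, or the current level is a limit, the node at level \<open>\<alpha>\<close>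
  can be added directly.
\<close>

lemma lev_less_trans: "lev_less a b \<Longrightarrow> lev_less b c \<Longrightarrow> lev_less a c"
  by (cases a; cases b; cases c) auto

lemma lev_less_irrefl: "\<not> lev_less a a"
  by (cases a) auto

lemma lev_succ_imp_less: "lev_succ a b \<Longrightarrow> lev_less a b"
  by (cases a; cases b) auto

lemma lev_succ_unique: "lev_succ a c \<Longrightarrow> lev_succ b c \<Longrightarrow> a = b"
  by (cases a; cases b; cases c) (auto, meson not_less_iff_gr_or_eq)

lemma
  assumes "inP F X R i"
  shows inP_finite: "finite X"
    and inP_partial_order: "partial_order_on X R"
    and inP_strict_lev: "\<forall>x y. strict R x y \<longrightarrow> lev_less (pi x) (pi y)"
    and inP_block_top: "\<forall>z. (\<exists>x\<in>X. piB x = B z) \<longrightarrow> Top z \<in> X"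
    and inP_mid_top: "\<forall>z k. Mid z k \<in> X \<longrightarrow> strict R (Mid z k) (Top z) \<and>
          (\<forall>z'. z' \<noteq> z \<and> Top z' \<in> X \<longrightarrow> \<not> strict R (Mid z k) (Top z'))"
    and inP_same_level: "\<forall>s\<in>X. \<forall>t\<in>X. s \<noteq> t \<and> piB s = piB t \<and> pi s = pi t \<longrightarrow> i {s, t} = {}"
    and inP_successor: "\<forall>t\<in>X. \<forall>s a. lev_succ a (pi t) \<and> strict R s t \<longrightarrow>
          (\<exists>v\<in>X. pi v = a \<and> (s, v) \<in> R \<and> strict R v t)"
    and inP_meet_subset: "\<forall>x\<in>X. \<forall>y\<in>X. x \<noteq> y \<longrightarrow> i {x, y} \<subseteq> X \<and> finite (i {x, y})"
    and inP_meet_strict: "\<forall>x y. strict R x y \<longrightarrow> i {x, y} = {x}"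
    and inP_meet_incomparable: "\<forall>x\<in>X. \<forall>y\<in>X. (x, y) \<notin> R \<and> (y, x) \<notin> R \<longrightarrow>
        (\<forall>u\<in>X. ((u, x) \<in> R \<and> (u, y) \<in> R) \<longleftrightarrow> (\<exists>v\<in>i {x, y}. (u, v) \<in> R))
      \<and> ((\<exists>zx zy. piB x = B zx \<and> piB y = B zy \<and> zx \<noteq> zy \<and>
            pi x \<in> {LW1, LW1s} \<and> pi y \<in> {LW1, LW1s}) \<longrightarrow>
          (\<forall>v\<in>i {x, y}. \<forall>zx zy. piB x = B zx \<and> piB y = B zy \<longrightarrow>
              lev_less (pi v) (Lv (F {zx, zy}))))"
  using assms unfolding inP_def by - (elim conjE, assumption)+

lemma leP_refl: "inP F X R i \<Longrightarrow> leP (X, R, i) (X, R, i)"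
  using partial_order_onD(4)[OF inP_partial_order] unfolding leP_def by blast

lemma leP_trans:
  assumes "leP (X2, R2, i2) (X1, R1, i1)" and "leP (X1, R1, i1) (X, R, i)"
  shows "leP (X2, R2, i2) (X, R, i)"
  using assms unfolding leP_def by (simp add: subset_iff) blast

lemma ex_fresh_index:
  fixes f :: "nat \<Rightarrow> 'a"
  assumes "finite X" and "inj f"
  shows "\<exists>m. n < m \<and> f m \<notin> X"
proof -
  have "finite (f -` X \<union> {..n})"
    using assms by (simp add: finite_vimageI)
  then obtain m where "m \<notin> f -` X \<union> {..n}"
    using ex_new_if_finite infinite_UNIV_nat by blast
  then show ?thesis by (auto simp: not_le)
qed

locale node_extension =
  fixes F :: "'k set \<Rightarrow> 'w::wellorder"
    and X :: "('w, 'k) node set" and R :: "('w, 'k) node rel"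
    and i :: "('w, 'k) node set \<Rightarrow> ('w, 'k) node set"
    and nw :: "('w, 'k) node" and U :: "('w, 'k) node set"
  assumes P: "inP F X R i"
    and new: "nw \<notin> X"
    and U_subset: "U \<subseteq> X"
    and U_above: "\<And>x. x \<in> U \<Longrightarrow> lev_less (pi nw) (pi x)"
    and U_upward: "\<And>x y. x \<in> U \<Longrightarrow> (x, y) \<in> R \<Longrightarrow> y \<in> U"
    and U_meet: "\<And>x y. x \<in> X \<Longrightarrow> y \<in> X \<Longrightarrow> (x, y) \<notin> R \<Longrightarrow> (y, x) \<notin> R \<Longrightarrow>
                   x \<in> U \<and> y \<in> U \<longleftrightarrow> (\<exists>v\<in>i {x, y}. v \<in> U)"
    and U_succ: "\<And>u a. u \<in> U \<Longrightarrow> lev_succ a (pi u) \<Longrightarrow>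
                   a = pi nw \<or> (\<exists>v\<in>U. pi v = a \<and> strict R v u)"
    and block_top: "\<And>z. piB nw = B z \<Longrightarrow> Top z \<in> insert nw X"
    and mid_top: "\<And>z k. nw = Mid z k \<Longrightarrow> Top z \<in> U \<and> (\<forall>z'. Top z' \<in> U \<longrightarrow> z' = z)"
begin

definition X' :: "('w, 'k) node set" where
  "X' = insert nw X"

definition R' :: "('w, 'k) node rel" where
  "R' = insert (nw, nw) (R \<union> {nw} \<times> U)"

definition i' :: "('w, 'k) node set \<Rightarrow> ('w, 'k) node set" where
  "i' A = (if A \<subseteq> X then i A else if \<exists>x\<in>U. A = {nw, x} then {nw} else {})"

lemma R_subset: "R \<subseteq> X \<times> X"
  using partial_order_onD(4)[OF inP_partial_order[OF P]] .

lemma R_refl: "x \<in> X \<Longrightarrow> (x, x) \<in> R"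
  using partial_order_onD(1)[OF inP_partial_order[OF P]] by (rule refl_onD)

lemma R_trans: "(x, y) \<in> R \<Longrightarrow> (y, z) \<in> R \<Longrightarrow> (x, z) \<in> R"
  using partial_order_onD(2)[OF inP_partial_order[OF P]] by (rule transD)

lemma R_antisym: "(x, y) \<in> R \<Longrightarrow> (y, x) \<in> R \<Longrightarrow> x = y"
  using partial_order_onD(3)[OF inP_partial_order[OF P]] by (rule antisymD)

lemma nw_not_in_U: "nw \<notin> U"
  using U_subset new by blast

lemma R'_old: "x \<in> X \<Longrightarrow> y \<in> X \<Longrightarrow> (x, y) \<in> R' \<longleftrightarrow> (x, y) \<in> R"
  unfolding R'_def using new by blast

lemma R'_from_new: "(nw, y) \<in> R' \<longleftrightarrow> y = nw \<or> y \<in> U"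
  unfolding R'_def using new R_subset by blast

lemma R'_to_new: "(x, nw) \<in> R' \<longleftrightarrow> x = nw"
  unfolding R'_def using new R_subset nw_not_in_U by blast

lemma strict_R'_old: "x \<noteq> nw \<Longrightarrow> strict R' x y \<longleftrightarrow> strict R x y"
  unfolding strict_def R'_def by blast

lemma strict_R'_new: "strict R' nw y \<longleftrightarrow> y \<in> U"
  unfolding strict_def using nw_not_in_U by (auto simp: R'_from_new)

lemma i'_old: "A \<subseteq> X \<Longrightarrow> i' A = i A"
  unfolding i'_def by simp

lemma i'_new: "x \<in> X \<Longrightarrow> i' {nw, x} = (if x \<in> U then {nw} else {})"
  unfolding i'_def using new U_subset by (auto simp: doubleton_eq_iff)

lemma partial_order: "partial_order_on X' R'"
  unfolding partial_order_on_def preorder_on_def refl_on_def trans_def antisym_def X'_def R'_def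
  using R_subset R_refl R_trans R_antisym U_subset U_upward new by blast

lemma strict_lev: "strict R' x y \<Longrightarrow> lev_less (pi x) (pi y)"
  using inP_strict_lev[OF P] U_above
  by (cases "x = nw") (auto simp: strict_R'_new strict_R'_old)

lemma block_tops: "x \<in> X' \<Longrightarrow> piB x = B z \<Longrightarrow> Top z \<in> X'"
  using inP_block_top[OF P] block_top unfolding X'_def by blast

lemma mid_tops:
  assumes "Mid z k \<in> X'"
  shows "strict R' (Mid z k) (Top z) \<and>
    (\<forall>z'. z' \<noteq> z \<and> Top z' \<in> X' \<longrightarrow> \<not> strict R' (Mid z k) (Top z'))"
proof (cases "Mid z k = nw")
  case True
  then show ?thesis using mid_top[of z k] strict_R'_new by auto
next
  case False
  then have "Mid z k \<in> X" using assms unfolding X'_def by blast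
  moreover have "\<not> strict R' (Mid z k) nw" using R'_to_new False unfolding strict_def by blast
  ultimately show ?thesis
    using inP_mid_top[OF P] strict_R'_old[OF False] unfolding X'_def by blast
qed

lemma same_level_no_meet:
  assumes "s \<in> X'" "u \<in> X'" "s \<noteq> u" "piB s = piB u" "pi s = pi u"
  shows "i' {s, u} = {}"
proof (cases "s = nw \<or> u = nw")
  case True
  then obtain x where "x \<in> X" "{s, u} = {nw, x}" "pi x = pi nw"
    using assms unfolding X'_def by auto
  then show ?thesis using i'_new U_above lev_less_irrefl by metis
next
  case False
  then have "s \<in> X" "u \<in> X" using assms unfolding X'_def by auto
  then show ?thesis using assms inP_same_level[OF P] i'_old by simp
qed

lemma successor_levels:
  assumes "u \<in> X'" "lev_succ a (pi u)" "strict R' s u"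
  shows "\<exists>v\<in>X'. pi v = a \<and> (s, v) \<in> R' \<and> strict R' v u"
proof (cases "s = nw")
  case True
  then have "u \<in> U" using assms strict_R'_new by blast
  with U_succ[OF this assms(2)] show ?thesis
    using True U_subset strict_R'_new strict_R'_old R'_from_new unfolding X'_def
    by (metis insertCI subsetD)
next
  case False
  then have "strict R s u" using assms strict_R'_old by blast
  then have "u \<in> X" using R_subset unfolding strict_def by blast
  then obtain v where "v \<in> X" "pi v = a" "(s, v) \<in> R" "strict R v u"
    using inP_successor[OF P] assms(2) \<open>strict R s u\<close> by blast
  moreover have "v \<noteq> nw" using \<open>v \<in> X\<close> new by blast
  ultimately show ?thesis using R'_old strict_R'_old R_subset \<open>u \<in> X\<close> False
    unfolding X'_def by blast
qed

lemma meet_finite_subset: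
  assumes "x \<in> X'" "y \<in> X'" "x \<noteq> y"
  shows "i' {x, y} \<subseteq> X' \<and> finite (i' {x, y})"
proof (cases "x = nw \<or> y = nw")
  case True
  then obtain w where "w \<in> X" "{x, y} = {nw, w}" using assms unfolding X'_def by auto
  then show ?thesis using i'_new unfolding X'_def by simp
next
  case False
  then have "x \<in> X" "y \<in> X" using assms unfolding X'_def by auto
  then show ?thesis using assms inP_meet_subset[OF P] i'_old unfolding X'_def by auto
qed

lemma meet_strict: "strict R' x y \<Longrightarrow> i' {x, y} = {x}"
proof (cases "x = nw")
  case True
  assume "strict R' x y"
  then show ?thesis using True strict_R'_new U_subset i'_new by auto
next
  case False
  assume "strict R' x y"
  then have "strict R x y" using False strict_R'_old by blast
  then show ?thesis using inP_meet_strict[OF P] R_subset i'_old unfolding strict_def by auto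
qed

lemma lower_bounds_old_pair:
  assumes x: "x \<in> X" and y: "y \<in> X" and nR: "(x, y) \<notin> R" "(y, x) \<notin> R" and u: "u \<in> X'"
  shows "(u, x) \<in> R' \<and> (u, y) \<in> R' \<longleftrightarrow> (\<exists>v\<in>i' {x, y}. (u, v) \<in> R')"
proof -
  have "x \<noteq> y" using R_refl x nR by blast
  then have meet: "i' {x, y} = i {x, y}" "i {x, y} \<subseteq> X"
    using x y i'_old inP_meet_subset[OF P] by auto
  show ?thesis
  proof (cases "u = nw")
    case True
    have cone: "(nw, v) \<in> R' \<longleftrightarrow> v \<in> U" if "v \<in> X" for v
      using that new by (auto simp: R'_from_new)
    have "(nw, x) \<in> R' \<and> (nw, y) \<in> R' \<longleftrightarrow> x \<in> U \<and> y \<in> U"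
      using cone x y by blast
    also have "\<dots> \<longleftrightarrow> (\<exists>v\<in>i {x, y}. v \<in> U)"
      by (rule U_meet[OF x y nR])
    also have "\<dots> \<longleftrightarrow> (\<exists>v\<in>i' {x, y}. (nw, v) \<in> R')"
      using cone meet by auto
    finally show ?thesis unfolding True .
  next
    case False
    then have "u \<in> X" using u unfolding X'_def by blast
    then have "(u, x) \<in> R \<and> (u, y) \<in> R \<longleftrightarrow> (\<exists>v\<in>i {x, y}. (u, v) \<in> R)"
      using inP_meet_incomparable[OF P] x y nR by blast
    moreover have "(\<exists>v\<in>i {x, y}. (u, v) \<in> R) \<longleftrightarrow> (\<exists>v\<in>i {x, y}. (u, v) \<in> R')"
      using R'_old \<open>u \<in> X\<close> meet(2) by blast
    ultimately show ?thesis using R'_old \<open>u \<in> X\<close> x y meet(1) by simp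
  qed
qed

lemma meet_incomparable:
  assumes "x \<in> X'" "y \<in> X'" "(x, y) \<notin> R'" "(y, x) \<notin> R'"
  shows "(\<forall>u\<in>X'. (u, x) \<in> R' \<and> (u, y) \<in> R' \<longleftrightarrow> (\<exists>v\<in>i' {x, y}. (u, v) \<in> R'))
    \<and> ((\<exists>zx zy. piB x = B zx \<and> piB y = B zy \<and> zx \<noteq> zy \<and>
          pi x \<in> {LW1, LW1s} \<and> pi y \<in> {LW1, LW1s}) \<longrightarrow>
        (\<forall>v\<in>i' {x, y}. \<forall>zx zy. piB x = B zx \<and> piB y = B zy \<longrightarrow>
            lev_less (pi v) (Lv (F {zx, zy}))))"
proof (cases "x = nw \<or> y = nw")
  case True
  then obtain w where w: "w \<in> X" "{x, y} = {nw, w}" "w \<notin> U"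
    using assms R'_from_new unfolding X'_def by auto
  then have "i' {x, y} = {}" using i'_new by simp
  moreover have "\<not> ((u, x) \<in> R' \<and> (u, y) \<in> R')" for u
  proof
    assume "(u, x) \<in> R' \<and> (u, y) \<in> R'"
    then have "(u, nw) \<in> R'" "(u, w) \<in> R'" using w(2) by (auto simp: doubleton_eq_iff)
    then show False using w new by (auto simp: R'_to_new R'_from_new)
  qed
  ultimately show ?thesis by simp
next
  case False
  then have X: "x \<in> X" "y \<in> X" and nR: "(x, y) \<notin> R" "(y, x) \<notin> R"
    using assms R'_old unfolding X'_def by auto
  then have "i' {x, y} = i {x, y}" using i'_old by simp
  then show ?thesis
    using lower_bounds_old_pair[OF X nR] inP_meet_incomparable[OF P] X nR by auto
qed

theorem extension_inP: "inP F X' R' i'"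
  unfolding inP_def
proof (intro conjI)
  show "finite X'" using inP_finite[OF P] unfolding X'_def by simp
  show "partial_order_on X' R'" by (rule partial_order)
  show "\<forall>x y. strict R' x y \<longrightarrow> lev_less (pi x) (pi y)" using strict_lev by blast
  show "\<forall>z. (\<exists>x\<in>X'. piB x = B z) \<longrightarrow> Top z \<in> X'" using block_tops by blast
  show "\<forall>z k. Mid z k \<in> X' \<longrightarrow> strict R' (Mid z k) (Top z) \<and>
          (\<forall>z'. z' \<noteq> z \<and> Top z' \<in> X' \<longrightarrow> \<not> strict R' (Mid z k) (Top z'))"
    using mid_tops by blast
  show "\<forall>s\<in>X'. \<forall>t\<in>X'. s \<noteq> t \<and> piB s = piB t \<and> pi s = pi t \<longrightarrow> i' {s, t} = {}"
    using same_level_no_meet by blast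
  show "\<forall>t\<in>X'. \<forall>s a. lev_succ a (pi t) \<and> strict R' s t \<longrightarrow>
          (\<exists>v\<in>X'. pi v = a \<and> (s, v) \<in> R' \<and> strict R' v t)"
    using successor_levels by blast
  show "\<forall>x\<in>X'. \<forall>y\<in>X'. x \<noteq> y \<longrightarrow> i' {x, y} \<subseteq> X' \<and> finite (i' {x, y})"
    using meet_finite_subset by blast
  show "\<forall>x y. strict R' x y \<longrightarrow> i' {x, y} = {x}" using meet_strict by blast
qed (use meet_incomparable in blast)

theorem extension_leP: "leP (X', R', i') (X, R, i)"
proof -
  have "R = R' \<inter> X \<times> X" using R'_old R_subset by auto
  moreover have "i' {x, y} = i {x, y}" if "x \<in> X" "y \<in> X" for x y
    using that i'_old by simp
  ultimately show ?thesis unfolding leP_def X'_def by auto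
qed

end

lemma inP_insert_isolated:
  assumes P: "inP F X R i" and new: "nw \<notin> X" and not_mid: "\<And>z k. nw \<noteq> Mid z k"
  shows "\<exists>X' R' i'. inP F X' R' i' \<and> leP (X', R', i') (X, R, i) \<and> X' = insert nw X"
proof -
  interpret node_extension F X R i nw "{}"
    by unfold_locales (use P new not_mid in \<open>auto elim: piB.elims\<close>)
  show ?thesis using extension_inP extension_leP unfolding X'_def by blast
qed

lemma inP_insert_below:
  assumes P: "inP F X R i" and t: "t \<in> X" and new: "nw \<notin> X"
    and below: "lev_less (pi nw) (pi t)"
    and pred: "\<And>d. lev_succ d (pi t) \<Longrightarrow> d = pi nw"
    and mid: "\<And>z k. nw = Mid z k \<Longrightarrow> t = Top z"
  shows "\<exists>X' R' i'. inP F X' R' i' \<and> leP (X', R', i') (X, R, i) \<and> nw \<in> X' \<and>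
           (\<forall>x\<in>X. (nw, x) \<in> R' \<longleftrightarrow> (t, x) \<in> R)"
proof -
  note po = partial_order_onD[OF inP_partial_order[OF P]]
  have lev: "\<And>x y. strict R x y \<Longrightarrow> lev_less (pi x) (pi y)"
    using inP_strict_lev[OF P] by blast
  have refl: "(t, t) \<in> R" using po(1) t by (rule refl_onD)
  have trans: "\<And>x y z. (x, y) \<in> R \<Longrightarrow> (y, z) \<in> R \<Longrightarrow> (x, z) \<in> R"
    using po(2) by (rule transD)
  have above: "lev_less (pi nw) (pi x)" if "(t, x) \<in> R" for x
    using that below lev lev_less_trans unfolding strict_def by (cases "t = x") blast+
  interpret node_extension F X R i nw "{x. (t, x) \<in> R}"
  proof
    fix u a assume "u \<in> {x. (t, x) \<in> R}" "lev_succ a (pi u)"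
    then show "a = pi nw \<or> (\<exists>v\<in>{x. (t, x) \<in> R}. pi v = a \<and> strict R v u)"
      using inP_successor[OF P] pred t po(4) unfolding strict_def by (cases "t = u") blast+
  next
    fix z assume "piB nw = B z"
    then show "Top z \<in> insert nw X"
      using t mid below by (cases nw) (auto elim: lev_less.elims)
  next
    fix z k assume "nw = Mid z k"
    moreover have "z' = z" if "(Top z, Top z') \<in> R" for z'
      using lev[of "Top z" "Top z'"] that unfolding strict_def by auto
    ultimately show "Top z \<in> {x. (t, x) \<in> R} \<and> (\<forall>z'. Top z' \<in> {x. (t, x) \<in> R} \<longrightarrow> z' = z)"
      using mid refl by auto
  next
    fix x y assume "x \<in> X" "y \<in> X" "(x, y) \<notin> R" "(y, x) \<notin> R"
    then show "x \<in> {x. (t, x) \<in> R} \<and> y \<in> {x. (t, x) \<in> R} \<longleftrightarrow> (\<exists>v\<in>i {x, y}. v \<in> {x. (t, x) \<in> R})"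
      using inP_meet_incomparable[OF P] t by blast
  qed (use P new po(4) trans above in blast)+
  have "\<forall>x\<in>X. (nw, x) \<in> R' \<longleftrightarrow> (t, x) \<in> R" using new by (auto simp: R'_from_new)
  then show ?thesis using extension_inP extension_leP unfolding X'_def by blast
qed

definition copy_below ::
    "('k set \<Rightarrow> 'w::wellorder) \<Rightarrow> 'w \<Rightarrow> nat \<Rightarrow> ('w, 'k) node set \<Rightarrow> ('w, 'k) node rel \<Rightarrow>
     (('w, 'k) node set \<Rightarrow> ('w, 'k) node set) \<Rightarrow> ('w, 'k) node \<Rightarrow> bool" where
  "copy_below F a n X R i t \<longleftrightarrow>
     (\<exists>X' R' i' s. inP F X' R' i' \<and> leP (X', R', i') (X, R, i) \<and>
        s \<in> X' - X \<and> (\<exists>m. s = Low a m \<and> n < m) \<and> (\<forall>x\<in>X. (s, x) \<in> R' \<longleftrightarrow> (t, x) \<in> R))"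

lemma copy_below_direct:
  assumes P: "inP F X R i" and t: "t \<in> X" and below: "lev_less (Lv a) (pi t)"
    and pred: "\<And>d. lev_succ d (pi t) \<Longrightarrow> d = Lv a"
  shows "copy_below F a n X R i t"
proof -
  obtain m where m: "n < m" "Low a m \<notin> X"
    using ex_fresh_index[OF inP_finite[OF P], of "Low a"] by (auto simp: inj_def)
  then obtain X' R' i' where "inP F X' R' i'" "leP (X', R', i') (X, R, i)" "Low a m \<in> X'"
    "\<forall>x\<in>X. (Low a m, x) \<in> R' \<longleftrightarrow> (t, x) \<in> R"
    using inP_insert_below[OF P t m(2)] below pred by auto
  then show ?thesis using m unfolding copy_below_def by blast
qed

lemma copy_below_through:
  assumes P: "inP F X R i" and t: "t \<in> X" and y_new: "y \<notin> X"
    and succ: "lev_succ (pi y) (pi t)" and mid: "\<And>z k. y = Mid z k \<Longrightarrow> t = Top z"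
    and copy_y: "\<And>X1 R1 i1. inP F X1 R1 i1 \<Longrightarrow> y \<in> X1 \<Longrightarrow> copy_below F a n X1 R1 i1 y"
  shows "copy_below F a n X R i t"
proof -
  have below: "lev_less (pi y) (pi t)" using succ by (rule lev_succ_imp_less)
  have only_pred: "\<And>d. lev_succ d (pi t) \<Longrightarrow> d = pi y" using lev_succ_unique succ by blast
  obtain X1 R1 i1 where p1: "inP F X1 R1 i1" "leP (X1, R1, i1) (X, R, i)" "y \<in> X1"
    and cone: "\<forall>x\<in>X. (y, x) \<in> R1 \<longleftrightarrow> (t, x) \<in> R"
    using inP_insert_below[OF P t y_new below] only_pred mid by blast
  then have "X \<subseteq> X1" unfolding leP_def by simp
  with copy_y[OF p1(1,3)] show ?thesis
    using p1(2) cone leP_trans unfolding copy_below_def by blast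
qed

lemma copy_below_Lv:
  "inP F X R i \<Longrightarrow> t \<in> X \<Longrightarrow> pi t = Lv b \<Longrightarrow> a < b \<Longrightarrow> copy_below F a n X R i t"
proof (induction b arbitrary: X R i t rule: less_induct)
  case (less b)
  show ?case
  proof (cases "\<exists>c. lev_succ (Lv c) (Lv b) \<and> a < c")
    case True
    then obtain c where c: "lev_succ (Lv c) (Lv b)" "a < c" by blast
    obtain m where "0 < m" "Low c m \<notin> X"
      using ex_fresh_index[OF inP_finite[OF less.prems(1)], of "Low c"] by (auto simp: inj_def)
    then show ?thesis
      using copy_below_through[OF less.prems(1,2), of "Low c m"] less.IH[of c] c less.prems(3)
      by auto
  next
    case False
    have "d = Lv a" if "lev_succ d (Lv b)" for d
      using that False less.prems(4) by (cases d) (auto, meson not_less_iff_gr_or_eq)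
    then show ?thesis using copy_below_direct[OF less.prems(1,2)] less.prems(3,4) by simp
  qed
qed

lemma copy_below_LW1: "inP F X R i \<Longrightarrow> t \<in> X \<Longrightarrow> pi t = LW1 \<Longrightarrow> copy_below F a n X R i t"
  by (rule copy_below_direct) (auto elim: lev_succ.elims)

lemma copy_below_LW1s:
  assumes P: "inP F X R i" and t: "t \<in> X" and top: "pi t = LW1s"
  shows "copy_below F a n X R i t"
proof -
  obtain z where z: "t = Top z" using top by (cases t) auto
  obtain m where m: "Mid z m \<notin> X"
    using ex_fresh_index[OF inP_finite[OF P], of "Mid z"] by (auto simp: inj_def)
  show ?thesis
  proof (rule copy_below_through[OF P t m])
    show "lev_succ (pi (Mid z m)) (pi t)" using top by simp
    show "\<And>z' k. Mid z m = Mid z' k \<Longrightarrow> t = Top z'" using z by simp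
    show "\<And>X1 R1 i1. inP F X1 R1 i1 \<Longrightarrow> Mid z m \<in> X1 \<Longrightarrow> copy_below F a n X1 R1 i1 (Mid z m)"
      by (rule copy_below_LW1) auto
  qed
qed

lemma copy_below: "inP F X R i \<Longrightarrow> t \<in> X \<Longrightarrow> lev_less (Lv a) (pi t) \<Longrightarrow> copy_below F a n X R i t"
  by (cases "pi t") (auto intro: copy_below_Lv copy_below_LW1 copy_below_LW1s)

lemma inP_insert:
  assumes P: "inP F X R i" and t: "t \<notin> X"
  shows "\<exists>X' R' i'. inP F X' R' i' \<and> leP (X', R', i') (X, R, i) \<and> t \<in> X'"
proof (cases t)
  case (Mid z k)
  have below: "lev_less (pi t) (pi (Top z))" "\<And>d. lev_succ d (pi (Top z)) \<Longrightarrow> d = pi t"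
    using Mid by (auto elim: lev_succ.elims)
  obtain X1 R1 i1 where p1: "inP F X1 R1 i1" "leP (X1, R1, i1) (X, R, i)" "Top z \<in> X1" "t \<notin> X1"
  proof (cases "Top z \<in> X")
    case False
    then show thesis using that inP_insert_isolated[OF P False] t Mid by auto
  qed (use that P t leP_refl in blast)
  then show ?thesis
    using inP_insert_below[OF p1(1,3,4) below] Mid leP_trans by blast
qed (use inP_insert_isolated[OF P t] in auto)

theorem lemma3p8:
  fixes F :: "'k set \<Rightarrow> 'w::wellorder"
  assumes w_uncountable: "\<not> countable (UNIV :: 'w set)"
    and w_segments: "\<forall>a::'w. countable {b. b < a}"
    and lambda_ge_omega3:
      "(cardSuc (cardSuc (cardSuc natLeq)), card_of (UNIV :: 'k set)) \<in> ordLeq"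
  shows
    "(\<forall>X R i (t :: ('w, 'k) node). inP F X R i \<and> t \<notin> X \<longrightarrow>
        (\<exists>X' R' i'. inP F X' R' i' \<and> leP (X', R', i') (X, R, i) \<and> t \<in> X'))
   \<and> (\<forall>X R i (t :: ('w, 'k) node) (a :: 'w) (n :: nat).
        inP F X R i \<and> t \<in> X \<and> lev_less (Lv a) (pi t) \<longrightarrow>
        (\<exists>X' R' i' s. inP F X' R' i' \<and> leP (X', R', i') (X, R, i) \<and>
           s \<in> X' - X \<and> (\<exists>m. s = Low a m \<and> n < m) \<and>
           (\<forall>x\<in>X. (s, x) \<in> R' \<longleftrightarrow> (t, x) \<in> R)))"
  using inP_insert copy_below unfolding copy_below_def by blast

end
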